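(* Let $\mathcal{D}$ be a distribution on $\mathbb{R}^d$, $f,h:\mathbb{R}^d\to\{0,1\}$ with $f$ a linear threshold function and $h$ a hypothesis, $q\ge2$, $k\in\{1,\dots,q-1\}$. Suppose $0<\mathrm{BagErr}_{\mathrm{oracle}}(h,f,\mathcal{D},q,k)\le\varepsilon'<1/(4q)$ and let $\varepsilon=4\varepsilon'$. Then (i) if $k\neq q/2$, $\Pr_{\mathbf{x}\sim\mathcal{D}}[f(\mathbf{x})\neq h(\mathbf{x})]\le\varepsilon$; and (ii) if $k=q/2$, $\Pr_{\mathbf{x}\sim\mathcal{D}}[f(\mathbf{x})\neq h(\mathbf{x})]\le\varepsilon$ or $\Pr_{\mathbf{x}\sim\mathcal{D}}[f(\mathbf{x})\neq1-h(\mathbf{x})]\le\varepsilon$.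
   Context: The bag oracle $\mathrm{Ex}(f,\mathcal{D},q,k)$ (defined for $1\le k\le q-1$, with both events $f=0,f=1$ of positive probability) returns a bag of $q$ independent points, $k$ drawn from $\mathcal{D}$ conditioned on $f=1$ and $q-k$ from $\mathcal{D}$ conditioned on $f=0$. $\mathrm{BagErr}_{\mathrm{oracle}}(h,f,\mathcal{D},q,k):=\Pr_{B\sim\mathrm{Ex}(f,\mathcal{D},q,k)}[\mathrm{Avg}\{h(\mathbf{x}):\mathbf{x}\in B\}\neq k/q]$. *)

theory Defs
  imports "HOL-Probability.Probability"
begin

definition ltf :: "(real ^ 'd \<Rightarrow> real) \<Rightarrow> bool" where
  "ltf f \<longleftrightarrow> (\<exists>(w :: real ^ 'd) (c :: real).
      \<forall>x. f x = (if w \<bullet> x + c > 0 then 1 else 0))"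

text \<open>The bag oracle Ex(f,D,q,k): a bag of q independent points, indexed by
  {..<q}; the first k drawn from D conditioned on f = 1, the remaining q-k from
  D conditioned on f = 0 (conditioning = uniform_measure, i.e. normalized restriction).\<close>
definition bag_oracle ::
  "'a measure \<Rightarrow> ('a \<Rightarrow> real) \<Rightarrow> nat \<Rightarrow> nat \<Rightarrow> (nat \<Rightarrow> 'a) measure" where
  "bag_oracle D f q k = PiM {..<q} (\<lambda>i.
      if i < k then uniform_measure D {x \<in> space D. f x = 1}
      else uniform_measure D {x \<in> space D. f x = 0})"

definition bag_err_oracle ::
  "('a \<Rightarrow> real) \<Rightarrow> ('a \<Rightarrow> real) \<Rightarrow> 'a measure \<Rightarrow> nat \<Rightarrow> nat \<Rightarrow> real" where
  "bag_err_oracle h f D q k =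
     measure (bag_oracle D f q k)
       {B \<in> space (bag_oracle D f q k).
          (\<Sum>i<q. h (B i)) / real q \<noteq> real k / real q}"

end

theory Submission
  imports Defs
begin

(* The labels h(x_1), ..., h(x_q) of a bag are independent, the first k distributed as h under
   D conditioned on f = 1 and the others as h under D conditioned on f = 0. A single label is
   independent of the sum of the others, so the label sum misses k with probability at least
   min(Pr[h = 0], Pr[h = 1]) for that label's distribution: hence h is eps'-close to a constant v1
   given f = 1 and to a constant v0 given f = 0. By the union bound, with probability at least
   1 - q eps' > eps' every label of a bag equals its typical value, so k v1 + (q - k) v0 = k. For
   v1, v0 in {0, 1} this leaves h close to f, or h close to 1 - f with k = q/2.
   This argument gives the bound eps' itself. *)

lemma indep_vars_PiM_components:
  assumes I: "I \<noteq> {}" and M: "\<And>i. i \<in> I \<Longrightarrow> prob_space (M i)"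
  shows "prob_space.indep_vars (PiM I M) M (\<lambda>i x. x i) I"
proof -
  interpret P: prob_space "PiM I M" by (rule prob_space_PiM) (rule M)
  have "distr (PiM I M) (PiM I M) (\<lambda>x. \<lambda>i\<in>I. x i)
      = distr (PiM I M) (PiM I M) (\<lambda>x. x)"
    by (rule distr_cong) (auto simp: space_PiM PiE_def extensional_def)
  also have "\<dots> = PiM I (\<lambda>i. distr (PiM I M) (M i) (\<lambda>x. x i))"
    by (simp add: distr_PiM_component M cong: PiM_cong)
  finally show ?thesis
    by (subst P.indep_vars_iff_distr_eq_PiM'[OF I]) auto
qed

lemma prob_PiM_component:
  assumes M: "\<And>i. i \<in> I \<Longrightarrow> prob_space (M i)" and i: "i \<in> I"
    and Q: "{x \<in> space (M i). Q x} \<in> sets (M i)"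
  shows "\<P>(B in PiM I M. Q (B i)) = \<P>(x in M i. Q x)"
proof -
  have "\<P>(x in M i. Q x)
      = measure (distr (PiM I M) (M i) (\<lambda>B. B i)) {x \<in> space (M i). Q x}"
    by (simp add: distr_PiM_component M i)
  also have "\<dots>
      = measure (PiM I M) ((\<lambda>B. B i) -` {x \<in> space (M i). Q x} \<inter> space (PiM I M))"
    by (rule measure_distr) (use i Q in auto)
  also have "(\<lambda>B. B i) -` {x \<in> space (M i). Q x} \<inter> space (PiM I M)
      = {B \<in> space (PiM I M). Q (B i)}"
    using i by (auto simp: space_PiM)
  finally show ?thesis ..
qed

lemma prob_PiM_sum_eq_le_max_component:
  fixes g :: "'a \<Rightarrow> real"
  assumes I: "finite I" and i: "i \<in> I"
    and M: "\<And>j. j \<in> I \<Longrightarrow> prob_space (M j)"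
    and g: "\<And>j. j \<in> I \<Longrightarrow> g \<in> borel_measurable (M j)"
    and g01: "\<And>x. g x = 0 \<or> g x = 1"
  shows "\<P>(B in PiM I M. (\<Sum>j\<in>I. g (B j)) = K)
           \<le> max \<P>(x in M i. g x = 1) \<P>(x in M i. g x = 0)"
proof -
  let ?P = "PiM I M"
  interpret P: prob_space ?P by (rule prob_space_PiM) (rule M)
  have gj: "(\<lambda>B. g (B j)) \<in> borel_measurable ?P" if "j \<in> I" for j
    using that g by measurable
  define R where "R B = (\<Sum>j\<in>I - {i}. g (B j))" for B
  have R: "R \<in> borel_measurable ?P"
    unfolding R_def by (intro borel_measurable_sum gj) auto
  have sum_split: "(\<Sum>j\<in>I. g (B j)) = g (B i) + R B" for B
    unfolding R_def using I i by (simp add: sum.remove)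
  have "P.indep_vars (\<lambda>_. borel) (\<lambda>j B. g (B j)) I"
    by (rule P.indep_vars_compose2[OF indep_vars_PiM_components]) (use i M g in auto)
  then have indep: "P.indep_var borel (\<lambda>B. g (B i)) borel R"
    using P.indep_vars_sum[of "I - {i}" i] I i
    unfolding R_def by (simp add: insert_absorb)
  have joint: "\<P>(B in ?P. g (B i) = v \<and> R B = w)
      = \<P>(x in M i. g x = v) * \<P>(B in ?P. R B = w)" for v w
  proof -
    have "\<P>(B in ?P. g (B i) = v) = \<P>(x in M i. g x = v)"
      by (rule prob_PiM_component) (use M i g in auto)
    with P.indep_varD[OF indep, of "{v}" "{w}"] show ?thesis
      by (simp add: vimage_def Int_def conj_commute)
  qed
  define c where "c = \<P>(x in M i. g x = 1)"
  define d where "d = \<P>(x in M i. g x = 0)"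
  have "{B \<in> space ?P. (\<Sum>j\<in>I. g (B j)) = K}
      = {B \<in> space ?P. g (B i) = 1 \<and> R B = K - 1}
        \<union> {B \<in> space ?P. g (B i) = 0 \<and> R B = K}"
    using g01 by (fastforce simp: sum_split)
  then have "\<P>(B in ?P. (\<Sum>j\<in>I. g (B j)) = K)
      = c * \<P>(B in ?P. R B = K - 1) + d * \<P>(B in ?P. R B = K)"
    by (simp, subst P.finite_measure_Union) (use gj i R in \<open>auto simp: joint c_def d_def\<close>)
  also have "\<dots> \<le> max c d * (\<P>(B in ?P. R B = K - 1) + \<P>(B in ?P. R B = K))"
    by (simp add: distrib_left add_mono mult_right_mono)
  also have "\<P>(B in ?P. R B = K - 1) + \<P>(B in ?P. R B = K)
      = P.prob ({B \<in> space ?P. R B = K - 1} \<union> {B \<in> space ?P. R B = K})"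
    by (rule P.finite_measure_Union[symmetric]) (use R in auto)
  also have "max c d * \<dots> \<le> max c d"
    by (simp add: c_def d_def max_def mult_left_le)
  finally show ?thesis unfolding c_def d_def .
qed

lemma component_deviation_le_prob_PiM_sum_ne:
  fixes g :: "'a \<Rightarrow> real"
  assumes I: "finite I" and i: "i \<in> I"
    and M: "\<And>j. j \<in> I \<Longrightarrow> prob_space (M j)"
    and g: "\<And>j. j \<in> I \<Longrightarrow> g \<in> borel_measurable (M j)"
    and g01: "\<And>x. g x = 0 \<or> g x = 1"
  shows "\<exists>v\<in>{0, 1}.
           \<P>(x in M i. g x \<noteq> v) \<le> \<P>(B in PiM I M. (\<Sum>j\<in>I. g (B j)) \<noteq> K)"
proof -
  interpret P: prob_space "PiM I M" by (rule prob_space_PiM) (rule M)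
  interpret Mi: prob_space "M i" using M i .
  have gi: "g \<in> borel_measurable (M i)" using g i .
  have "{x \<in> space (M i). g x \<noteq> 1} = {x \<in> space (M i). g x = 0}"
    "{x \<in> space (M i). g x \<noteq> 0} = {x \<in> space (M i). g x = 1}"
    using g01 by force+
  moreover have "\<P>(x in M i. g x \<noteq> 1) = 1 - \<P>(x in M i. g x = 1)"
    by (rule Mi.prob_neg) (use gi in measurable)
  moreover have "\<P>(B in PiM I M. (\<Sum>j\<in>I. g (B j)) \<noteq> K)
      = 1 - \<P>(B in PiM I M. (\<Sum>j\<in>I. g (B j)) = K)"
    by (rule P.prob_neg) (use g in measurable)
  moreover have "\<P>(B in PiM I M. (\<Sum>j\<in>I. g (B j)) = K)
      \<le> max \<P>(x in M i. g x = 1) \<P>(x in M i. g x = 0)"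
    by (rule prob_PiM_sum_eq_le_max_component) (use I i M g g01 in auto)
  ultimately show ?thesis
    by (simp add: max_def split: if_splits)
qed

lemma sum_typical_values_eq:
  fixes g :: "'a \<Rightarrow> real" and v :: "'i \<Rightarrow> real"
  assumes I: "finite I"
    and M: "\<And>j. j \<in> I \<Longrightarrow> prob_space (M j)"
    and g: "\<And>j. j \<in> I \<Longrightarrow> g \<in> borel_measurable (M j)"
    and typical: "\<And>j. j \<in> I \<Longrightarrow> \<P>(x in M j. g x \<noteq> v j) \<le> e"
    and err: "\<P>(B in PiM I M. (\<Sum>j\<in>I. g (B j)) \<noteq> K) \<le> e"
    and small: "(real (card I) + 1) * e < 1"
  shows "(\<Sum>j\<in>I. v j) = K"
proof (rule ccontr)
  assume sum_ne: "(\<Sum>j\<in>I. v j) \<noteq> K"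
  let ?P = "PiM I M"
  interpret P: prob_space ?P by (rule prob_space_PiM) (rule M)
  have gj: "(\<lambda>B. g (B j)) \<in> borel_measurable ?P" if "j \<in> I" for j
    using that g by measurable
  define E where "E = {B \<in> space ?P. \<forall>j\<in>I. g (B j) = v j}"
  have E: "E \<in> P.events"
    unfolding E_def using I gj by measurable
  have "E \<subseteq> {B \<in> space ?P. (\<Sum>j\<in>I. g (B j)) \<noteq> K}"
    using sum_ne by (auto simp: E_def)
  moreover have "{B \<in> space ?P. (\<Sum>j\<in>I. g (B j)) \<noteq> K} \<in> P.events"
    using I gj by measurable
  ultimately have "P.prob E \<le> e"
    using err by (meson P.finite_measure_mono order_trans)
  have "space ?P - E = (\<Union>j\<in>I. {B \<in> space ?P. g (B j) \<noteq> v j})"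
    by (auto simp: E_def)
  then have "1 - P.prob E = P.prob (\<Union>j\<in>I. {B \<in> space ?P. g (B j) \<noteq> v j})"
    by (simp add: P.prob_compl[OF E, symmetric])
  also have "\<dots> \<le> (\<Sum>j\<in>I. \<P>(B in ?P. g (B j) \<noteq> v j))"
    by (rule P.finite_measure_subadditive_finite) (use I gj in auto)
  also have "\<dots> = (\<Sum>j\<in>I. \<P>(x in M j. g x \<noteq> v j))"
    by (intro sum.cong prob_PiM_component) (use M g in auto)
  also have "\<dots> \<le> real (card I) * e"
    using sum_mono[OF typical, of I] by simp
  finally show False
    using \<open>P.prob E \<le> e\<close> small by (simp add: algebra_simps)
qed

lemma (in prob_space) prob_conj_le_conditional:
  assumes Q: "{x \<in> space M. Q x} \<in> events"
    and pos: "\<P>(x in M. P x) > 0"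
    and cond: "\<P>(x in uniform_measure M {x \<in> space M. P x}. Q x) \<le> e"
  shows "\<P>(x in M. P x \<and> Q x) \<le> \<P>(x in M. P x) * e"
proof -
  have "\<P>(x in uniform_measure M {x \<in> space M. P x}. Q x)
      = prob ({x \<in> space M. P x} \<inter> {x \<in> space M. Q x}) / \<P>(x in M. P x)"
    using pos Q by (subst measure_uniform_measure) (auto simp: emeasure_eq_measure)
  also have "{x \<in> space M. P x} \<inter> {x \<in> space M. Q x} = {x \<in> space M. P x \<and> Q x}"
    by blast
  finally have "\<P>(x in uniform_measure M {x \<in> space M. P x}. Q x)
      = \<P>(x in M. P x \<and> Q x) / \<P>(x in M. P x)" .
  with cond pos show ?thesis
    by (simp add: divide_le_eq mult.commute)
qed

lemma prob_disagree_le_conditional: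
  fixes D :: "'a measure" and f h :: "'a \<Rightarrow> real"
  assumes D: "prob_space D" and f: "f \<in> borel_measurable D" and h: "h \<in> borel_measurable D"
    and pos1: "\<P>(x in D. f x = 1) > 0" and pos0: "\<P>(x in D. f x = 0) > 0"
    and e: "0 \<le> e"
    and cond1: "\<P>(x in uniform_measure D {x \<in> space D. f x = 1}. h x \<noteq> v1) \<le> e"
    and cond0: "\<P>(x in uniform_measure D {x \<in> space D. f x = 0}. h x \<noteq> v0) \<le> e"
  shows "\<P>(x in D. (f x = 1 \<and> h x \<noteq> v1) \<or> (f x = 0 \<and> h x \<noteq> v0)) \<le> e"
proof -
  interpret D: prob_space D by (rule D)
  have "{x \<in> space D. (f x = 1 \<and> h x \<noteq> v1) \<or> (f x = 0 \<and> h x \<noteq> v0)}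
      = {x \<in> space D. f x = 1 \<and> h x \<noteq> v1} \<union> {x \<in> space D. f x = 0 \<and> h x \<noteq> v0}"
    by auto
  then have "\<P>(x in D. (f x = 1 \<and> h x \<noteq> v1) \<or> (f x = 0 \<and> h x \<noteq> v0))
      \<le> \<P>(x in D. f x = 1 \<and> h x \<noteq> v1) + \<P>(x in D. f x = 0 \<and> h x \<noteq> v0)"
    using f h by (simp add: measure_Un_le)
  also have "\<dots> \<le> \<P>(x in D. f x = 1) * e + \<P>(x in D. f x = 0) * e"
    by (intro add_mono D.prob_conj_le_conditional pos1 pos0 cond1 cond0) (use f h in measurable)
  also have "\<dots> = (\<P>(x in D. f x = 1) + \<P>(x in D. f x = 0)) * e"
    by (simp add: distrib_right)
  also have "\<dots> \<le> e"
  proof -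
    have "\<P>(x in D. f x = 1) + \<P>(x in D. f x = 0)
        = D.prob ({x \<in> space D. f x = 1} \<union> {x \<in> space D. f x = 0})"
      by (rule D.finite_measure_Union[symmetric]) (use f in auto)
    then show ?thesis
      using e by (simp add: mult_left_le_one_le)
  qed
  finally show ?thesis .
qed

lemma binary_label_sum_cases:
  fixes v1 v0 :: real
  assumes "v1 \<in> {0, 1}" "v0 \<in> {0, 1}" "0 < k" "k < q"
    and "real k * v1 + real (q - k) * v0 = real k"
  shows "v1 = 1 \<and> v0 = 0 \<or> v1 = 0 \<and> v0 = 1 \<and> real k = real q / 2"
  using assms by auto

lemma bag_err_oracle_nonneg: "0 \<le> bag_err_oracle h f D q k"
  unfolding bag_err_oracle_def by (rule measure_nonneg)

lemma bag_err_oracle_eq: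
  assumes "q > 0"
  shows "bag_err_oracle h f D q k = \<P>(B in bag_oracle D f q k. (\<Sum>i<q. h (B i)) \<noteq> real k)"
  using assms by (simp add: bag_err_oracle_def)

lemma bag_oracle_typical_labels:
  fixes D :: "'a measure" and f h :: "'a \<Rightarrow> real"
  assumes D: "prob_space D"
    and f: "f \<in> borel_measurable D" and h: "h \<in> borel_measurable D"
    and h01: "\<And>x. h x = 0 \<or> h x = 1"
    and k: "0 < k" "k < q"
    and pos1: "\<P>(x in D. f x = 1) > 0" and pos0: "\<P>(x in D. f x = 0) > 0"
    and err: "bag_err_oracle h f D q k \<le> e"
    and small: "(real q + 1) * e < 1"
  obtains v1 v0 :: real
  where "v1 \<in> {0, 1}" "v0 \<in> {0, 1}" "real k * v1 + real (q - k) * v0 = real k"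
    "\<P>(x in uniform_measure D {x \<in> space D. f x = 1}. h x \<noteq> v1) \<le> e"
    "\<P>(x in uniform_measure D {x \<in> space D. f x = 0}. h x \<noteq> v0) \<le> e"
proof -
  interpret D: prob_space D by (rule D)
  define M where "M b = uniform_measure D {x \<in> space D. f x = b}" for b
  define Mi where "Mi i = (if i < k then M 1 else M 0)" for i
  have M: "prob_space (M b)" if "\<P>(x in D. f x = b) > 0" for b
    unfolding M_def
    by (rule prob_space_uniform_measure)
      (use that in \<open>simp_all add: D.emeasure_eq_measure\<close>)
  have Mi: "prob_space (Mi i)" for i
    using M pos1 pos0 by (simp add: Mi_def)
  have h_Mi: "h \<in> borel_measurable (Mi i)" for i
    using h by (simp add: Mi_def M_def)
  let ?err = "\<P>(B in PiM {..<q} Mi. (\<Sum>i<q. h (B i)) \<noteq> real k)"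
  have "bag_oracle D f q k = PiM {..<q} Mi"
    unfolding bag_oracle_def Mi_def[abs_def] M_def ..
  then have err: "?err \<le> e"
    using err k by (simp add: bag_err_oracle_eq)
  have Mi_ends: "Mi 0 = M 1" "Mi (q - 1) = M 0"
    using k unfolding Mi_def by auto
  have "\<exists>v\<in>{0, 1}. \<P>(x in Mi 0. h x \<noteq> v) \<le> ?err"
    by (rule component_deviation_le_prob_PiM_sum_ne) (use Mi h_Mi h01 k in auto)
  then obtain v1 where v1: "v1 \<in> {0, 1}" "\<P>(x in M 1. h x \<noteq> v1) \<le> e"
    using err Mi_ends by (auto intro: order_trans)
  have "\<exists>v\<in>{0, 1}. \<P>(x in Mi (q - 1). h x \<noteq> v) \<le> ?err"
    by (rule component_deviation_le_prob_PiM_sum_ne) (use Mi h_Mi h01 k in auto)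
  then obtain v0 where v0: "v0 \<in> {0, 1}" "\<P>(x in M 0. h x \<noteq> v0) \<le> e"
    using err Mi_ends by (auto intro: order_trans)
  define v where "v i = (if i < k then v1 else v0)" for i
  have sum_v: "(\<Sum>i<q. v i) = real k"
    by (rule sum_typical_values_eq[where M = Mi and g = h and e = e])
      (use Mi h_Mi v1 v0 err small in \<open>auto simp: v_def Mi_def\<close>)
  have "{..<q} \<inter> {i. i < k} = {..<k}" "{..<q} \<inter> - {i. i < k} = {k..<q}"
    using k by auto
  then have "(\<Sum>i<q. v i) = real k * v1 + real (q - k) * v0"
    by (simp add: v_def sum.If_cases)
  with sum_v show thesis
    using that v1 v0 by (simp add: M_def)
qed

lemma bag_err_oracle_small_imp_agreement:
  fixes D :: "'a measure" and f h :: "'a \<Rightarrow> real"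
  assumes D: "prob_space D" and f: "f \<in> borel_measurable D" and h: "h \<in> borel_measurable D"
    and f01: "\<And>x. f x = 0 \<or> f x = 1" and h01: "\<And>x. h x = 0 \<or> h x = 1"
    and k: "0 < k" "k < q"
    and pos1: "\<P>(x in D. f x = 1) > 0" and pos0: "\<P>(x in D. f x = 0) > 0"
    and err: "bag_err_oracle h f D q k \<le> e"
    and small: "(real q + 1) * e < 1"
  shows "\<P>(x in D. f x \<noteq> h x) \<le> e
           \<or> real k = real q / 2 \<and> \<P>(x in D. f x \<noteq> 1 - h x) \<le> e"
proof -
  obtain v1 v0 where v: "v1 \<in> {0, 1}" "v0 \<in> {0, 1}"
    and sum_v: "real k * v1 + real (q - k) * v0 = real k"
    and cond1: "\<P>(x in uniform_measure D {x \<in> space D. f x = 1}. h x \<noteq> v1) \<le> e"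
    and cond0: "\<P>(x in uniform_measure D {x \<in> space D. f x = 0}. h x \<noteq> v0) \<le> e"
    by (rule bag_oracle_typical_labels[OF D f h h01 k pos1 pos0 err small])
  have "0 \<le> e"
    using err bag_err_oracle_nonneg order_trans by blast
  then have close: "\<P>(x in D. (f x = 1 \<and> h x \<noteq> v1) \<or> (f x = 0 \<and> h x \<noteq> v0)) \<le> e"
    by (rule prob_disagree_le_conditional[OF D f h pos1 pos0 _ cond1 cond0])
  from binary_label_sum_cases[OF v k sum_v] consider
    "v1 = 1" "v0 = 0" | "v1 = 0" "v0 = 1" "real k = real q / 2"
    by force
  then show ?thesis
  proof cases
    case 1
    then have "{x \<in> space D. f x \<noteq> h x}
        = {x \<in> space D. (f x = 1 \<and> h x \<noteq> v1) \<or> (f x = 0 \<and> h x \<noteq> v0)}"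
      using f01 h01 by fastforce
    with close show ?thesis by simp
  next
    case 2
    then have "{x \<in> space D. f x \<noteq> 1 - h x}
        = {x \<in> space D. (f x = 1 \<and> h x \<noteq> v1) \<or> (f x = 0 \<and> h x \<noteq> v0)}"
      using f01 h01 by fastforce
    with close 2 show ?thesis by simp
  qed
qed

lemma ltf_values: "ltf f \<Longrightarrow> f x = 0 \<or> f x = 1"
  by (auto simp: ltf_def)

lemma ltf_borel_measurable:
  assumes "ltf f"
  shows "f \<in> borel_measurable borel"
proof -
  obtain w c where "f = (\<lambda>x. if w \<bullet> x + c > 0 then 1 else 0)"
    using assms unfolding ltf_def by blast
  moreover have "(\<lambda>x. if w \<bullet> x + c > 0 then 1 else 0 :: real) \<in> borel_measurable borel"
    by measurable
  ultimately show ?thesis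
    by simp
qed

theorem theorem9:
  fixes D :: "(real ^ 'd) measure"
    and f h :: "real ^ 'd \<Rightarrow> real"
    and q k :: nat
    and eps' :: real
  assumes D: "prob_space D" "sets D = sets borel"
    and f_ltf: "ltf f"
    and h_01: "\<forall>x. h x \<in> {0, 1}"
    and h_meas: "h \<in> borel_measurable borel"
    and q: "q \<ge> 2"
    and k: "1 \<le> k" "k \<le> q - 1"
    and pos1: "measure D {x \<in> space D. f x = 1} > 0"
    and pos0: "measure D {x \<in> space D. f x = 0} > 0"
    and err_pos: "0 < bag_err_oracle h f D q k"
    and err_le: "bag_err_oracle h f D q k \<le> eps'"
    and eps'_lt: "eps' < 1 / (4 * real q)"
  shows "(real k \<noteq> real q / 2 \<longrightarrow>
            measure D {x \<in> space D. f x \<noteq> h x} \<le> 4 * eps') \<and>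
         (real k = real q / 2 \<longrightarrow>
            measure D {x \<in> space D. f x \<noteq> h x} \<le> 4 * eps' \<or>
            measure D {x \<in> space D. f x \<noteq> 1 - h x} \<le> 4 * eps')"
proof -
  have f: "f \<in> borel_measurable D" and h: "h \<in> borel_measurable D"
    using ltf_borel_measurable[OF f_ltf] h_meas
    by (simp_all add: measurable_cong_sets[OF D(2) refl])
  have eps': "0 \<le> eps'"
    using err_le bag_err_oracle_nonneg order_trans by blast
  have "(real q + 1) * eps' \<le> 4 * real q * eps'"
    using q eps' by (intro mult_right_mono) auto
  also have "\<dots> < 1"
    using eps'_lt q by (simp add: field_simps)
  finally have small: "(real q + 1) * eps' < 1" .
  have "\<P>(x in D. f x \<noteq> h x) \<le> eps'
      \<or> real k = real q / 2 \<and> \<P>(x in D. f x \<noteq> 1 - h x) \<le> eps'"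
    by (rule bag_err_oracle_small_imp_agreement[OF D(1) f h ltf_values[OF f_ltf]])
      (use h_01 k q pos1 pos0 err_le small in auto)
  with eps' show ?thesis
    by auto
qed

end
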